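(* If $\phi^{\alpha_1\cdots\alpha_n}\in\mathcal F$, then $\dfrac{\partial\phi^{\alpha_1\cdots\alpha_n}}{\partial\mu_\beta}\in\mathcal F$.
   Context: Work in 4-dimensional Minkowski space with metric $g_{\alpha\beta}$ of signature $(-,+,+,+)$; indices are raised and lowered with $g$ and repeated indices are summed. $\lambda$ is a real scalar, $\mu_\beta$ is a time-like covector and $\gamma=\sqrt{-\mu^\alpha\mu_\alpha}>0$. The family $\mathcal F$ consists of the (smooth) Lorentz-covariant (isotropic) tensor-valued functions $\phi^{\alpha_1\cdots\alpha_n}(\lambda,\mu_\beta)$ which are totally symmetric in their indices and whose derivative $\partial\phi^{\alpha_1\cdots\alpha_n}/\partial\mu_\beta$ is totally symmetric in $\alpha_1,\dots,\alpha_n,\beta$. *)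

theory Defs
  imports "HOL-Analysis.Analysis"
begin

text \<open>Minkowski space: indices range over the 4-element type 4, index 0 is the time index.
  Metric g = diag(-1,1,1,1) (its inverse has the same components).\<close>

definition mg :: "4 \<Rightarrow> 4 \<Rightarrow> real" where
  "mg a b = (if a = b then (if a = 0 then -1 else 1) else 0)"

definition mmat :: "real^4^4" where
  "mmat = (\<chi> a b. mg a b)"

definition msq :: "real^4 \<Rightarrow> real" where
  "msq m = (\<Sum>a\<in>UNIV. \<Sum>b\<in>UNIV. mg a b * m $ a * m $ b)"

definition timelike :: "(real^4) set" where
  "timelike = {m. msq m < 0}"

text \<open>Lorentz transformations Lambda^alpha_beta = L $ alpha $ beta:
  Lambda^alpha_gamma g_alpha beta Lambda^beta_delta = g_gamma delta.\<close>
definition lorentz :: "real^4^4 \<Rightarrow> bool" where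
  "lorentz L \<longleftrightarrow> transpose L ** mmat ** L = mmat"

definition cov_transform :: "real^4^4 \<Rightarrow> real^4 \<Rightarrow> real^4" where
  "cov_transform L m = (mmat ** L ** mmat) *v m"

fun Ck_on :: "nat \<Rightarrow> 'a::euclidean_space set \<Rightarrow> ('a \<Rightarrow> real) \<Rightarrow> bool" where
  "Ck_on 0 S f = continuous_on S f"
| "Ck_on (Suc k) S f = (f differentiable_on S \<and>
      (\<forall>v. Ck_on k S (\<lambda>x. frechet_derivative f (at x) v)))"

definition smooth_on :: "'a::euclidean_space set \<Rightarrow> ('a \<Rightarrow> real) \<Rightarrow> bool" where
  "smooth_on S f \<longleftrightarrow> (\<forall>k. Ck_on k S f)"

text \<open>A tensor-valued function phi^{alpha_1...alpha_n}(lambda, mu): the component with upper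
  indices alpha_1..alpha_n is  phi lam mu [alpha_1,...,alpha_n]  (index lists of length n).\<close>
type_synonym tfun = "real \<Rightarrow> real^4 \<Rightarrow> 4 list \<Rightarrow> real"

definition pd_mu :: "tfun \<Rightarrow> 4 list \<Rightarrow> 4 \<Rightarrow> real \<Rightarrow> real^4 \<Rightarrow> real" where
  "pd_mu phi is b l m = deriv (\<lambda>t. phi l (m + t *\<^sub>R axis b 1) is) 0"

text \<open>The derivative tensor d phi^{alpha_1..alpha_n}/d mu_beta, with index list
  [alpha_1,...,alpha_n,beta] (the new index beta is the last one).\<close>
definition dmu :: "tfun \<Rightarrow> tfun" where
  "dmu phi l m js = (if js = [] then 0 else pd_mu phi (butlast js) (last js) l m)"

definition tsym :: "nat \<Rightarrow> tfun \<Rightarrow> bool" where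
  "tsym n phi \<longleftrightarrow> (\<forall>l. \<forall>m\<in>timelike. \<forall>is js. length is = n \<longrightarrow> mset js = mset is \<longrightarrow>
      phi l m js = phi l m is)"

definition lorentz_cov :: "nat \<Rightarrow> tfun \<Rightarrow> bool" where
  "lorentz_cov n phi \<longleftrightarrow> (\<forall>L l m is. lorentz L \<longrightarrow> m \<in> timelike \<longrightarrow> length is = n \<longrightarrow>
      phi l (cov_transform L m) is =
        (\<Sum>js\<in>{js. length js = n}. (\<Prod>k<n. L $ (is ! k) $ (js ! k)) * phi l m js))"

definition famF :: "nat \<Rightarrow> tfun \<Rightarrow> bool" where
  "famF n phi \<longleftrightarrow>
     (\<forall>is. length is = n \<longrightarrow> smooth_on (UNIV \<times> timelike) (\<lambda>(l, m). phi l m is)) \<and>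
     lorentz_cov n phi \<and>
     tsym n phi \<and>
     tsym (Suc n) (dmu phi)"

end

theory Submission
  imports Defs
begin

text \<open>The components of \<open>\<partial>\<phi>/\<partial>\<mu>\<^sub>\<beta>\<close> are directional derivatives of
  smooth functions, hence smooth. Lorentz covariance follows by differentiating the covariance
  identity along the line \<open>\<mu> + t \<Lambda>\<^sub>c\<close> through the \<open>c\<close>-th row of \<open>\<Lambda>\<close>: its
  transform \<open>\<mu>' + t e\<^sub>c\<close> runs along the \<open>c\<close>-th coordinate axis, so the chain rule
  contributes exactly one more factor \<open>\<Lambda>\<close>. Finally, the second derivative tensor is
  symmetric in its first \<open>n + 1\<close> indices because \<open>\<partial>\<phi>/\<partial>\<mu>\<close> is, and in its last
  two by Schwarz's theorem; these two kinds of permutations generate all of them.\<close>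

lemma Ck_on_Suc_has_derivative:
  assumes "open S" "Ck_on (Suc k) S f" "x \<in> S"
  shows "(f has_derivative frechet_derivative f (at x)) (at x)"
  using assms by (auto simp: differentiable_on_eq_differentiable_at frechet_derivative_works)

lemma Ck_on_cong:
  assumes "open S" "\<And>x. x \<in> S \<Longrightarrow> f x = g x"
  shows "Ck_on k S f = Ck_on k S g"
  using assms(2)
proof (induction k arbitrary: f g)
  case 0
  then show ?case by (simp cong: continuous_on_cong)
next
  case (Suc k)
  have has_derivative_iff: "(f has_derivative D) (at x) \<longleftrightarrow> (g has_derivative D) (at x)"
    if "x \<in> S" for x D
    using has_derivative_transform_within_open[OF _ assms(1) that] Suc.prems by metis
  then have "f differentiable_on S \<longleftrightarrow> g differentiable_on S"
    unfolding differentiable_on_eq_differentiable_at[OF assms(1)] differentiable_def by blast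
  moreover have "frechet_derivative f (at x) = frechet_derivative g (at x)" if "x \<in> S" for x
    unfolding frechet_derivative_def using has_derivative_iff[OF that] by simp
  then have "Ck_on k S (\<lambda>x. frechet_derivative f (at x) v) =
      Ck_on k S (\<lambda>x. frechet_derivative g (at x) v)" for v
    by (intro Suc.IH) auto
  ultimately show ?case by simp
qed

lemma smooth_on_cong:
  assumes "open S" "\<And>x. x \<in> S \<Longrightarrow> f x = g x" "smooth_on S f"
  shows "smooth_on S g"
  using assms Ck_on_cong[OF assms(1,2)] by (simp add: smooth_on_def)

lemma smooth_on_frechet_derivative:
  assumes "smooth_on S f"
  shows "smooth_on S (\<lambda>x. frechet_derivative f (at x) v)"
  using assms Ck_on.simps(2) unfolding smooth_on_def by blast

lemma has_real_derivative_along_line: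
  fixes f :: "'a::real_normed_vector \<Rightarrow> real"
  assumes "(f has_derivative D) (at (x + t *\<^sub>R v))"
  shows "((\<lambda>s. f (x + s *\<^sub>R v)) has_real_derivative D v) (at t)"
proof -
  have "((\<lambda>s. x + s *\<^sub>R v) has_derivative (\<lambda>s. s *\<^sub>R v)) (at t)"
    by (auto intro!: derivative_eq_intros)
  from has_derivative_compose[OF this assms]
  have "((\<lambda>s. f (x + s *\<^sub>R v)) has_derivative (\<lambda>s. D (s *\<^sub>R v))) (at t)" .
  moreover have "(\<lambda>s. D (s *\<^sub>R v)) = (\<lambda>s. D v * s)"
    using has_derivative_linear[OF assms] by (simp add: linear_scale mult.commute)
  ultimately show ?thesis by (simp add: has_field_derivative_def)
qed

lemma mean_value_along_segment:
  fixes f :: "'a::real_normed_vector \<Rightarrow> real"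
  assumes "h > 0" and "\<And>t. 0 \<le> t \<Longrightarrow> t \<le> h \<Longrightarrow> (f has_derivative f' t) (at (x + t *\<^sub>R v))"
  shows "\<exists>\<tau>. 0 < \<tau> \<and> \<tau> < h \<and> f (x + h *\<^sub>R v) - f x = h * f' \<tau> v"
proof -
  have "((\<lambda>s. f (x + s *\<^sub>R v)) has_derivative (\<lambda>d. f' t v * d)) (at t within {0..h})"
    if "0 \<le> t" "t \<le> h" for t
    using has_real_derivative_along_line[OF assms(2)[OF that]]
    by (auto simp: has_field_derivative_def intro: has_derivative_at_withinI)
  from mvt_simple[OF assms(1) this] show ?thesis
    by (auto simp: mult.commute)
qed

lemma mixed_second_difference_mean_value:
  fixes f :: "'a::euclidean_space \<Rightarrow> real"
  assumes S: "open S" and C2: "Ck_on 2 S f" and h: "h > 0"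
    and box: "\<And>s t. 0 \<le> s \<Longrightarrow> s \<le> h \<Longrightarrow> 0 \<le> t \<Longrightarrow> t \<le> h \<Longrightarrow> x + s *\<^sub>R u + t *\<^sub>R v \<in> S"
  shows "\<exists>\<sigma> \<tau>. 0 < \<sigma> \<and> \<sigma> < h \<and> 0 < \<tau> \<and> \<tau> < h \<and>
     f (x + h *\<^sub>R u + h *\<^sub>R v) - f (x + h *\<^sub>R u) - f (x + h *\<^sub>R v) + f x =
     h * h * frechet_derivative (\<lambda>y. frechet_derivative f (at y) u) (at (x + \<sigma> *\<^sub>R u + \<tau> *\<^sub>R v)) v"
proof -
  define Df where "Df = (\<lambda>y. frechet_derivative f (at y))"
  define G where "G = (\<lambda>y. Df y u)"
  have C2': "Ck_on (Suc (Suc 0)) S f" using C2 by (simp add: numeral_2_eq_2)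
  have Df: "(f has_derivative Df y) (at y)" if "y \<in> S" for y
    unfolding Df_def using Ck_on_Suc_has_derivative[OF S C2' that] .
  have "Ck_on (Suc 0) S G" using C2' by (simp add: G_def Df_def)
  then have DG: "(G has_derivative frechet_derivative G (at y)) (at y)" if "y \<in> S" for y
    using Ck_on_Suc_has_derivative[OF S _ that] by blast
  have shift: "((\<lambda>y. f (y + h *\<^sub>R v)) has_derivative Df (y + h *\<^sub>R v)) (at y)"
    if "y + h *\<^sub>R v \<in> S" for y
    using has_derivative_compose[OF has_derivative_add_const[OF has_derivative_ident] Df[OF that]] by simp
  have "((\<lambda>y. f (y + h *\<^sub>R v) - f y) has_derivative
      (\<lambda>w. Df (x + s *\<^sub>R u + h *\<^sub>R v) w - Df (x + s *\<^sub>R u) w)) (at (x + s *\<^sub>R u))"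
    if "0 \<le> s" "s \<le> h" for s
    using has_derivative_diff[OF shift Df] box[OF that, of h] box[OF that, of 0] h by simp
  from mean_value_along_segment[OF h this] obtain \<sigma> where \<sigma>: "0 < \<sigma>" "\<sigma> < h" and
    first: "(f (x + h *\<^sub>R u + h *\<^sub>R v) - f (x + h *\<^sub>R u)) - (f (x + h *\<^sub>R v) - f x) =
      h * (Df (x + \<sigma> *\<^sub>R u + h *\<^sub>R v) u - Df (x + \<sigma> *\<^sub>R u) u)"
    by (auto simp: add_ac)
  obtain \<tau> where \<tau>: "0 < \<tau>" "\<tau> < h" and
    second: "G (x + \<sigma> *\<^sub>R u + h *\<^sub>R v) - G (x + \<sigma> *\<^sub>R u) =
      h * frechet_derivative G (at (x + \<sigma> *\<^sub>R u + \<tau> *\<^sub>R v)) v"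
    using mean_value_along_segment[OF h, of G "\<lambda>t. frechet_derivative G (at (x + \<sigma> *\<^sub>R u + t *\<^sub>R v))"
        "x + \<sigma> *\<^sub>R u" v] DG box \<sigma> by auto
  show ?thesis
    using first second \<sigma> \<tau> by (auto simp: G_def Df_def algebra_simps)
qed

text \<open>By the mixed second-difference mean value theorem, for small \<open>h\<close> the
  mixed second difference divided by \<open>h\<^sup>2\<close> is a value of either mixed partial close to \<open>x\<close>;
  continuity of both at \<open>x\<close> forces them to agree.\<close>

lemma Ck_on_2_frechet_derivative_commute:
  fixes f :: "'a::euclidean_space \<Rightarrow> real"
  assumes S: "open S" and C2: "Ck_on 2 S f" and x: "x \<in> S"
  shows "frechet_derivative (\<lambda>y. frechet_derivative f (at y) u) (at x) v =
         frechet_derivative (\<lambda>y. frechet_derivative f (at y) v) (at x) u"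
    (is "?H1 x = ?H2 x")
proof (rule ccontr)
  define e where "e = \<bar>?H1 x - ?H2 x\<bar> / 2"
  assume "?H1 x \<noteq> ?H2 x"
  then have "e > 0" by (simp add: e_def)
  have "continuous_on S ?H1" "continuous_on S ?H2"
    using C2 by (auto simp: numeral_2_eq_2)
  then have "isCont ?H1 x" "isCont ?H2 x"
    using S x by (auto simp: continuous_on_eq_continuous_at)
  then have "\<forall>\<^sub>F y in nhds x. \<bar>?H1 y - ?H1 x\<bar> < e" "\<forall>\<^sub>F y in nhds x. \<bar>?H2 y - ?H2 x\<bar> < e"
    using \<open>e > 0\<close> by (auto simp: eventually_nhds_conv_at isCont_def dist_real_def dest!: tendstoD)
  moreover have "\<forall>\<^sub>F y in nhds x. y \<in> S"
    using eventually_nhds_in_open[OF S x] .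
  ultimately have "\<forall>\<^sub>F y in nhds x. y \<in> S \<and> \<bar>?H1 y - ?H1 x\<bar> < e \<and> \<bar>?H2 y - ?H2 x\<bar> < e"
    by eventually_elim blast
  then obtain r where "r > 0" and
    near: "\<And>y. dist y x < r \<Longrightarrow> y \<in> S \<and> \<bar>?H1 y - ?H1 x\<bar> < e \<and> \<bar>?H2 y - ?H2 x\<bar> < e"
    unfolding eventually_nhds_metric by blast
  define h where "h = r / (norm u + norm v + 1)"
  have denom_pos: "norm u + norm v + 1 > 0"
    by (simp add: add_nonneg_pos)
  then have "h > 0"
    using \<open>r > 0\<close> by (simp add: h_def)
  have small: "dist (x + s *\<^sub>R a + t *\<^sub>R b) x < r"
    if "0 \<le> s" "s \<le> h" "0 \<le> t" "t \<le> h" "norm a + norm b = norm u + norm v" for s t a b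
  proof -
    have "dist (x + s *\<^sub>R a + t *\<^sub>R b) x \<le> s * norm a + t * norm b"
      using that norm_triangle_ineq[of "s *\<^sub>R a" "t *\<^sub>R b"] by (simp add: dist_norm)
    also have "\<dots> \<le> h * norm a + h * norm b"
      using that by (intro add_mono mult_right_mono) auto
    also have "\<dots> = h * (norm u + norm v)"
      using that(5) by (simp add: distrib_left[symmetric])
    also have "\<dots> < h * (norm u + norm v + 1)"
      using \<open>h > 0\<close> by simp
    also have "\<dots> = r"
      using denom_pos by (simp add: h_def)
    finally show ?thesis .
  qed
  obtain s1 t1 where st1: "0 < s1" "s1 < h" "0 < t1" "t1 < h" and
    E1: "f (x + h *\<^sub>R u + h *\<^sub>R v) - f (x + h *\<^sub>R u) - f (x + h *\<^sub>R v) + f x =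
      h * h * ?H1 (x + s1 *\<^sub>R u + t1 *\<^sub>R v)"
    using mixed_second_difference_mean_value[OF S C2 \<open>h > 0\<close>, of x u v] near small by blast
  obtain s2 t2 where st2: "0 < s2" "s2 < h" "0 < t2" "t2 < h" and
    E2: "f (x + h *\<^sub>R v + h *\<^sub>R u) - f (x + h *\<^sub>R v) - f (x + h *\<^sub>R u) + f x =
      h * h * ?H2 (x + s2 *\<^sub>R v + t2 *\<^sub>R u)"
    using mixed_second_difference_mean_value[OF S C2 \<open>h > 0\<close>, of x v u] near small
    by (metis add.commute)
  have "?H1 (x + s1 *\<^sub>R u + t1 *\<^sub>R v) = ?H2 (x + s2 *\<^sub>R v + t2 *\<^sub>R u)"
    using E1 E2 \<open>h > 0\<close> by (simp add: algebra_simps)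
  moreover have "\<bar>?H1 (x + s1 *\<^sub>R u + t1 *\<^sub>R v) - ?H1 x\<bar> < e"
    using near small[of s1 t1 u v] st1 by simp
  moreover have "\<bar>?H2 (x + s2 *\<^sub>R v + t2 *\<^sub>R u) - ?H2 x\<bar> < e"
    using near small[of s2 t2 v u] st2 by (simp add: add.commute)
  ultimately show False
    unfolding e_def by (simp add: abs_if split: if_splits)
qed

lemma sum_lists_length_Suc:
  fixes G :: "'a::finite list \<Rightarrow> 'b::comm_monoid_add"
  shows "(\<Sum>js\<in>{js. length js = Suc n}. G js) = (\<Sum>xs\<in>{xs. length xs = n}. \<Sum>b\<in>UNIV. G (xs @ [b]))"
proof -
  have "{js :: 'a list. length js = Suc n} = (\<lambda>(xs, b). xs @ [b]) ` ({xs. length xs = n} \<times> UNIV)"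
  proof (intro set_eqI iffI)
    fix js :: "'a list"
    assume "js \<in> {js. length js = Suc n}"
    then have "js = butlast js @ [last js]" "length (butlast js) = n"
      by (auto intro: append_butlast_last_id[symmetric])
    then show "js \<in> (\<lambda>(xs, b). xs @ [b]) ` ({xs. length xs = n} \<times> UNIV)"
      by (metis (mono_tags) UNIV_I case_prod_conv image_eqI mem_Collect_eq mem_Sigma_iff)
  qed auto
  moreover have "inj_on (\<lambda>(xs, b). xs @ [b]) ({xs::'a list. length xs = n} \<times> UNIV)"
    by (auto simp: inj_on_def)
  ultimately show ?thesis
    by (simp add: sum.reindex sum.cartesian_product split_def)
qed

lemma mset_eq_invariant_of_butlast_perm_and_last_swap:
  assumes butlast_perm:
      "\<And>xs ys c. length xs = Suc n \<Longrightarrow> mset ys = mset xs \<Longrightarrow> P (ys @ [c]) = P (xs @ [c])"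
    and last_swap: "\<And>xs b c. length xs = n \<Longrightarrow> P (xs @ [b, c]) = P (xs @ [c, b])"
    and "length iss = Suc (Suc n)" and "mset js = mset iss"
  shows "P js = P iss"
proof -
  obtain xs c where iss: "iss = xs @ [c]" and lxs: "length xs = Suc n"
    using \<open>length iss = Suc (Suc n)\<close> by (cases iss rule: rev_cases) auto
  have "length js = length iss" using \<open>mset js = mset iss\<close> by (rule mset_eq_length)
  then obtain ys d where js: "js = ys @ [d]"
    using \<open>length iss = Suc (Suc n)\<close> by (cases js rule: rev_cases) auto
  have m: "mset ys + {#d#} = mset xs + {#c#}" using \<open>mset js = mset iss\<close> iss js by simp
  show ?thesis
  proof (cases "c = d")
    case True
    then have "mset ys = mset xs" using m by simp
    then show ?thesis using butlast_perm[OF lxs, of ys c] iss js \<open>c = d\<close> by simp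
  next
    case False
    have "c \<in># mset ys + {#d#}" using m by simp
    then have "c \<in> set ys" using False by simp
    define zs where "zs = remove1 c ys"
    have mz: "mset ys = mset (zs @ [c])" using \<open>c \<in> set ys\<close> by (simp add: zs_def)
    have "length ys = length xs" using arg_cong[OF m, of size] by simp
    then have lzs: "length zs = n" using \<open>c \<in> set ys\<close> lxs by (simp add: zs_def length_remove1)
    have "P js = P ((zs @ [c]) @ [d])"
      using butlast_perm[of "zs @ [c]" ys d] lzs mz js by simp
    also have "\<dots> = P ((zs @ [d]) @ [c])"
      using last_swap[OF lzs, of c d] by simp
    also have "\<dots> = P iss"
      using butlast_perm[OF lxs, of "zs @ [d]" c] m mz iss by simp
    finally show ?thesis .
  qed
qed

lemma open_timelike: "open timelike"
  unfolding timelike_def msq_def by (intro open_Collect_less continuous_intros)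

lemma eventually_line_in_timelike:
  assumes "m \<in> timelike"
  shows "\<forall>\<^sub>F t in nhds 0. m + t *\<^sub>R w \<in> timelike"
proof -
  have "open ((\<lambda>t::real. m + t *\<^sub>R w) -` timelike)"
    by (intro continuous_open_vimage open_timelike) (auto intro!: continuous_intros)
  then show ?thesis
    using eventually_nhds_in_open assms by fastforce
qed

lemma mmat_mult_mmat: "mmat ** mmat = mat 1"
  by (simp add: vec_eq_iff matrix_matrix_mult_def mmat_def mat_def mg_def sum_4 forall_4)

lemma transpose_mult_axis: "transpose A *v axis c 1 = A $ c"
  for A :: "'a::comm_semiring_1^'n^'m"
  by (simp add: vec_eq_iff matrix_vector_mult_def transpose_def axis_def mult.commute[of "A $ _ $ _"] mult_if_delta)

lemma lorentz_right_inverse: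
  assumes "lorentz L"
  shows "(mmat ** L ** mmat) ** transpose L = mat 1"
proof -
  have "(mmat ** transpose L ** mmat) ** L = mmat ** (transpose L ** mmat ** L)"
    by (simp add: matrix_mul_assoc)
  also have "\<dots> = mat 1"
    using assms mmat_mult_mmat by (simp add: lorentz_def)
  finally have "L ** (mmat ** transpose L ** mmat) = mat 1"
    using matrix_left_right_inverse by blast
  then have "L ** mmat ** transpose L = mmat"
    by (metis matrix_mul_assoc matrix_mul_lid matrix_mul_rid mmat_mult_mmat)
  then have "mmat ** (L ** mmat ** transpose L) = mat 1"
    by (simp add: mmat_mult_mmat)
  then show ?thesis
    by (simp add: matrix_mul_assoc)
qed

lemma cov_transform_add_row:
  assumes "lorentz L"
  shows "cov_transform L (m + t *\<^sub>R L $ c) = cov_transform L m + t *\<^sub>R axis c 1"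
proof -
  have "(mmat ** L ** mmat) *v (L $ c) = axis c 1"
    using lorentz_right_inverse[OF assms]
    by (simp add: matrix_vector_mul_assoc flip: transpose_mult_axis del: transpose_matrix_vector)
  then show ?thesis
    by (simp add: cov_transform_def matrix_vector_right_distrib matrix_vector_mult_scaleR)
qed

definition smooth_tensor :: "nat \<Rightarrow> tfun \<Rightarrow> bool" where
  "smooth_tensor n phi \<longleftrightarrow>
     (\<forall>is. length is = n \<longrightarrow> smooth_on (UNIV \<times> timelike) (\<lambda>(l, m). phi l m is))"

lemma famF_iff:
  "famF n phi \<longleftrightarrow> smooth_tensor n phi \<and> lorentz_cov n phi \<and> tsym n phi \<and> tsym (Suc n) (dmu phi)"
  by (simp add: famF_def smooth_tensor_def)

lemma open_UNIV_times_timelike: "open (UNIV \<times> timelike)"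
  by (intro open_Times open_UNIV open_timelike)

lemma smooth_tensor_has_derivative:
  assumes "smooth_tensor n phi" "length xs = n" "m \<in> timelike"
  shows "((\<lambda>(l, m). phi l m xs) has_derivative frechet_derivative (\<lambda>(l, m). phi l m xs) (at (l, m)))
      (at (l, m))"
proof (rule Ck_on_Suc_has_derivative[OF open_UNIV_times_timelike])
  show "Ck_on (Suc 0) (UNIV \<times> timelike) (\<lambda>(l, m). phi l m xs)"
    using assms(1,2) unfolding smooth_tensor_def smooth_on_def by blast
qed (use assms(3) in simp)

lemma has_real_derivative_along_line_snd:
  fixes F :: "'a::real_normed_vector \<times> 'b::real_normed_vector \<Rightarrow> real"
  assumes "(F has_derivative D) (at (l, m))"
  shows "((\<lambda>t. F (l, m + t *\<^sub>R w)) has_real_derivative D (0, w)) (at 0)"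
  using has_real_derivative_along_line[of F D "(l, m)" 0 "(0, w)"] assms by simp

lemma dmu_snoc: "dmu phi l m (xs @ [b]) = deriv (\<lambda>t. phi l (m + t *\<^sub>R axis b 1) xs) 0"
  by (simp add: dmu_def pd_mu_def)

lemma dmu_snoc_eq_frechet_derivative:
  assumes "smooth_tensor n phi" "length xs = n" "m \<in> timelike"
  shows "dmu phi l m (xs @ [b]) = frechet_derivative (\<lambda>(l, m). phi l m xs) (at (l, m)) (0, axis b 1)"
  using DERIV_imp_deriv[OF has_real_derivative_along_line_snd[OF smooth_tensor_has_derivative[OF assms]]]
  by (simp add: dmu_snoc)

lemma smooth_tensor_dmu:
  assumes "smooth_tensor n phi"
  shows "smooth_tensor (Suc n) (dmu phi)"
  unfolding smooth_tensor_def
proof (intro allI impI)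
  fix iss :: "4 list"
  assume "length iss = Suc n"
  then obtain xs b where iss: "iss = xs @ [b]" and len: "length xs = n"
    by (cases iss rule: rev_cases) auto
  have "smooth_on (UNIV \<times> timelike) (\<lambda>(l, m). phi l m xs)"
    using assms len by (simp add: smooth_tensor_def)
  from smooth_on_frechet_derivative[OF this, of "(0, axis b 1)"]
  show "smooth_on (UNIV \<times> timelike) (\<lambda>(l, m). dmu phi l m iss)"
    by (rule smooth_on_cong[OF open_UNIV_times_timelike, rotated])
      (auto simp: iss dmu_snoc_eq_frechet_derivative[OF assms len])
qed

lemma has_real_derivative_tensor_along_line:
  assumes "smooth_tensor n phi" "length xs = n" "m \<in> timelike"
  shows "((\<lambda>t. phi l (m + t *\<^sub>R w) xs) has_real_derivative (\<Sum>b\<in>UNIV. w $ b * dmu phi l m (xs @ [b])))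
      (at 0)"
proof -
  define D where "D = frechet_derivative (\<lambda>(l, m). phi l m xs) (at (l, m))"
  have has_D: "((\<lambda>(l, m). phi l m xs) has_derivative D) (at (l, m))"
    unfolding D_def by (rule smooth_tensor_has_derivative[OF assms])
  have "(0, w) = (\<Sum>b\<in>UNIV. w $ b *\<^sub>R (0::real, axis b (1::real)))"
    using basis_expansion[of w] by (simp add: prod_eq_iff fst_sum snd_sum scalar_mult_eq_scaleR)
  then have "D (0, w) = (\<Sum>b\<in>UNIV. D (w $ b *\<^sub>R (0, axis b 1)))"
    using linear_sum[OF has_derivative_linear[OF has_D]] by metis
  also have "\<dots> = (\<Sum>b\<in>UNIV. w $ b * D (0, axis b 1))"
    by (simp only: linear_scale[OF has_derivative_linear[OF has_D]] real_scaleR_def)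
  also have "\<dots> = (\<Sum>b\<in>UNIV. w $ b * dmu phi l m (xs @ [b]))"
    by (simp add: D_def dmu_snoc_eq_frechet_derivative[OF assms])
  finally show ?thesis
    using has_real_derivative_along_line_snd[OF has_D, of w] by simp
qed

lemma lorentz_cov_dmu:
  assumes smooth: "smooth_tensor n phi" and cov: "lorentz_cov n phi"
  shows "lorentz_cov (Suc n) (dmu phi)"
  unfolding lorentz_cov_def
proof (intro allI impI)
  fix L l m and iss :: "4 list"
  assume L: "lorentz L" and m: "m \<in> timelike" and "length iss = Suc n"
  then obtain xs c where iss: "iss = xs @ [c]" and len: "length xs = n"
    by (cases iss rule: rev_cases) auto
  define J where "J = {js :: 4 list. length js = n}"
  define P where "P js = (\<Prod>k<n. L $ (xs ! k) $ (js ! k))" for js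
  have cov_xs: "phi l (cov_transform L y) xs = (\<Sum>js\<in>J. P js * phi l y js)" if "y \<in> timelike" for y
    using cov L that len unfolding lorentz_cov_def J_def P_def by blast
  have "dmu phi l (cov_transform L m) iss = deriv (\<lambda>t. phi l (cov_transform L m + t *\<^sub>R axis c 1) xs) 0"
    by (simp add: iss dmu_snoc)
  also have "\<dots> = deriv (\<lambda>t. \<Sum>js\<in>J. P js * phi l (m + t *\<^sub>R L $ c) js) 0"
    using eventually_line_in_timelike[OF m, of "L $ c"]
    by (intro deriv_cong_ev refl) (auto elim!: eventually_mono simp: cov_xs cov_transform_add_row[OF L, symmetric])
  also have "\<dots> = (\<Sum>js\<in>J. P js * (\<Sum>b\<in>UNIV. L $ c $ b * dmu phi l m (js @ [b])))"
    by (intro DERIV_imp_deriv DERIV_sum DERIV_cmult has_real_derivative_tensor_along_line[OF smooth _ m])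
      (simp add: J_def)
  also have "\<dots> = (\<Sum>js\<in>J. \<Sum>b\<in>UNIV.
      (\<Prod>k<Suc n. L $ (iss ! k) $ ((js @ [b]) ! k)) * dmu phi l m (js @ [b]))"
    using len by (auto simp: J_def P_def iss sum_distrib_left prod.lessThan_Suc nth_append mult_ac
        intro!: sum.cong prod.cong)
  also have "\<dots> =
      (\<Sum>js\<in>{js. length js = Suc n}. (\<Prod>k<Suc n. L $ (iss ! k) $ (js ! k)) * dmu phi l m js)"
    unfolding J_def by (rule sum_lists_length_Suc[symmetric])
  finally show "dmu phi l (cov_transform L m) iss =
      (\<Sum>js\<in>{js. length js = Suc n}. (\<Prod>k<Suc n. L $ (iss ! k) $ (js ! k)) * dmu phi l m js)" .
qed

lemma dmu_dmu_eq_second_frechet_derivative: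
  assumes smooth: "smooth_tensor n phi" and len: "length xs = n" and m: "m \<in> timelike"
  shows "dmu (dmu phi) l m (xs @ [b, c]) =
    frechet_derivative (\<lambda>p. frechet_derivative (\<lambda>(l, m). phi l m xs) (at p) (0, axis b 1))
      (at (l, m)) (0, axis c 1)"
proof -
  define g where "g = (\<lambda>p. frechet_derivative (\<lambda>(l, m). phi l m xs) (at p) (0, axis b 1))"
  have g_eq: "(\<lambda>(l, m). dmu phi l m (xs @ [b])) p = g p" if "p \<in> UNIV \<times> timelike" for p
    using that by (auto simp: g_def dmu_snoc_eq_frechet_derivative[OF smooth len])
  have "smooth_tensor (Suc n) (dmu phi)"
    using smooth by (rule smooth_tensor_dmu)
  then have "dmu (dmu phi) l m ((xs @ [b]) @ [c]) =
      frechet_derivative (\<lambda>(l, m). dmu phi l m (xs @ [b])) (at (l, m)) (0, axis c 1)"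
    using len m by (intro dmu_snoc_eq_frechet_derivative) simp_all
  also have "frechet_derivative (\<lambda>(l, m). dmu phi l m (xs @ [b])) (at (l, m)) = frechet_derivative g (at (l, m))"
    using smooth_tensor_has_derivative[OF \<open>smooth_tensor (Suc n) (dmu phi)\<close> _ m, of "xs @ [b]"] len m g_eq
    by (intro frechet_derivative_transform_within_open[OF _ open_UNIV_times_timelike])
      (auto simp: differentiable_def)
  finally show ?thesis unfolding g_def by simp
qed

lemma tsym_dmu_dmu:
  assumes smooth: "smooth_tensor n phi" and sym: "tsym (Suc n) (dmu phi)"
  shows "tsym (Suc (Suc n)) (dmu (dmu phi))"
  unfolding tsym_def
proof (intro allI ballI impI)
  fix l m and iss js :: "4 list"
  assume m: "m \<in> timelike" and len: "length iss = Suc (Suc n)" and perm: "mset js = mset iss"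
  show "dmu (dmu phi) l m js = dmu (dmu phi) l m iss"
  proof (rule mset_eq_invariant_of_butlast_perm_and_last_swap[OF _ _ len perm])
    fix xs ys :: "4 list" and c
    assume "length xs = Suc n" "mset ys = mset xs"
    then have "dmu phi l y ys = dmu phi l y xs" if "y \<in> timelike" for y
      using sym that unfolding tsym_def by blast
    then have "\<forall>\<^sub>F t in nhds 0.
        dmu phi l (m + t *\<^sub>R axis c 1) ys = dmu phi l (m + t *\<^sub>R axis c 1) xs"
      using eventually_line_in_timelike[OF m, of "axis c 1"] by (auto elim!: eventually_mono)
    then show "dmu (dmu phi) l m (ys @ [c]) = dmu (dmu phi) l m (xs @ [c])"
      unfolding dmu_snoc by (intro deriv_cong_ev refl)
  next
    fix xs :: "4 list" and b c
    assume len: "length xs = n"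
    then have "Ck_on 2 (UNIV \<times> timelike) (\<lambda>(l, m). phi l m xs)"
      using smooth unfolding smooth_tensor_def smooth_on_def by blast
    from Ck_on_2_frechet_derivative_commute[OF open_UNIV_times_timelike this]
    show "dmu (dmu phi) l m (xs @ [b, c]) = dmu (dmu phi) l m (xs @ [c, b])"
      using m unfolding dmu_dmu_eq_second_frechet_derivative[OF smooth len m] by simp
  qed
qed

theorem proposition2:
  fixes phi :: tfun and n :: nat
  assumes "famF n phi"
  shows "famF (Suc n) (dmu phi)"
proof -
  from assms have "smooth_tensor n phi" "lorentz_cov n phi" "tsym (Suc n) (dmu phi)"
    by (simp_all add: famF_iff)
  then show ?thesis
    by (simp add: famF_iff smooth_tensor_dmu lorentz_cov_dmu tsym_dmu_dmu)
qed

end
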